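(* Let $(\mathfrak g,[\cdot,\cdot]_{\mathfrak g},E)$ be an ENL algebra and $K:W\to\mathfrak g$ an ENE-relative Rota–Baxter operator with respect to an ENE-representation $(W;T,\rho)$. Define $[u,v]_K:=\rho(Ku)v-\rho(Kv)u$ for $u,v\in W$. Then $(W,[\cdot,\cdot]_K,T)$ is an ENL algebra.
   Context: Vector spaces are finite-dimensional over an algebraically closed field of characteristic zero. An ENL algebra is a Lie algebra with linear $E$ satisfying $E[x,y]=[x,Ey]$ for all $x,y$. An ENE-representation $(W;T,\rho)$ of $(\mathfrak g,E)$ is a Lie algebra representation $\rho:\mathfrak g\to\mathfrak{gl}(W)$ with linear $T:W\to W$ such that $T(\rho(x)u)=\rho(Ex)u=\rho(x)(Tu)$. An ENE-relative Rota–Baxter operator with respect to $(W;T,\rho)$ is a linear $K:W\to\mathfrak g$ with $[Ku,Kv]_{\mathfrak g}=K(\rho(Ku)v-\rho(Kv)u)$ for all $u,v\in W$ and $E\circ K=K\circ T$. *)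

theory Defs
  imports "HOL-Analysis.Analysis" "HOL-Computational_Algebra.Polynomial"
begin

definition fin_vs :: "('k::field \<Rightarrow> 'v::ab_group_add \<Rightarrow> 'v) \<Rightarrow> bool" where
  "fin_vs s \<longleftrightarrow> (\<exists>B. finite_dimensional_vector_space s B)"

definition is_linear :: "('k::field \<Rightarrow> 'v::ab_group_add \<Rightarrow> 'v) \<Rightarrow>
    ('k \<Rightarrow> 'w::ab_group_add \<Rightarrow> 'w) \<Rightarrow> ('v \<Rightarrow> 'w) \<Rightarrow> bool" where
  "is_linear s1 s2 f \<longleftrightarrow> Vector_Spaces.linear s1 s2 f"

definition lie_algebra :: "('k::field \<Rightarrow> 'g::ab_group_add \<Rightarrow> 'g) \<Rightarrow> ('g \<Rightarrow> 'g \<Rightarrow> 'g) \<Rightarrow> bool" where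
  "lie_algebra s br \<longleftrightarrow> vector_space s
     \<and> (\<forall>x. is_linear s s (br x)) \<and> (\<forall>y. is_linear s s (\<lambda>x. br x y))
     \<and> (\<forall>x. br x x = 0)
     \<and> (\<forall>x y z. br x (br y z) + br y (br z x) + br z (br x y) = 0)"

definition ENL_algebra :: "('k::field \<Rightarrow> 'g::ab_group_add \<Rightarrow> 'g) \<Rightarrow> ('g \<Rightarrow> 'g \<Rightarrow> 'g) \<Rightarrow> ('g \<Rightarrow> 'g) \<Rightarrow> bool" where
  "ENL_algebra s br E \<longleftrightarrow> lie_algebra s br \<and> is_linear s s E
     \<and> (\<forall>x y. E (br x y) = br x (E y))"

definition lie_rep :: "('k::field \<Rightarrow> 'g::ab_group_add \<Rightarrow> 'g) \<Rightarrow> ('g \<Rightarrow> 'g \<Rightarrow> 'g) \<Rightarrow>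
    ('k \<Rightarrow> 'w::ab_group_add \<Rightarrow> 'w) \<Rightarrow> ('g \<Rightarrow> 'w \<Rightarrow> 'w) \<Rightarrow> bool" where
  "lie_rep s br sw rho \<longleftrightarrow> vector_space sw
     \<and> (\<forall>x y u. rho (x + y) u = rho x u + rho y u)
     \<and> (\<forall>c x u. rho (s c x) u = sw c (rho x u))
     \<and> (\<forall>x. is_linear sw sw (rho x))
     \<and> (\<forall>x y u. rho (br x y) u = rho x (rho y u) - rho y (rho x u))"

definition ENE_rep :: "('k::field \<Rightarrow> 'g::ab_group_add \<Rightarrow> 'g) \<Rightarrow> ('g \<Rightarrow> 'g \<Rightarrow> 'g) \<Rightarrow> ('g \<Rightarrow> 'g) \<Rightarrow>
    ('k \<Rightarrow> 'w::ab_group_add \<Rightarrow> 'w) \<Rightarrow> ('w \<Rightarrow> 'w) \<Rightarrow> ('g \<Rightarrow> 'w \<Rightarrow> 'w) \<Rightarrow> bool" where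
  "ENE_rep s br E sw T rho \<longleftrightarrow> lie_rep s br sw rho \<and> is_linear sw sw T
     \<and> (\<forall>x u. T (rho x u) = rho (E x) u \<and> rho (E x) u = rho x (T u))"

definition ENE_relative_RB :: "('k::field \<Rightarrow> 'g::ab_group_add \<Rightarrow> 'g) \<Rightarrow> ('g \<Rightarrow> 'g \<Rightarrow> 'g) \<Rightarrow> ('g \<Rightarrow> 'g) \<Rightarrow>
    ('k \<Rightarrow> 'w::ab_group_add \<Rightarrow> 'w) \<Rightarrow> ('w \<Rightarrow> 'w) \<Rightarrow> ('g \<Rightarrow> 'w \<Rightarrow> 'w) \<Rightarrow> ('w \<Rightarrow> 'g) \<Rightarrow> bool" where
  "ENE_relative_RB s br E sw T rho K \<longleftrightarrow> is_linear sw s K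
     \<and> (\<forall>u v. br (K u) (K v) = K (rho (K u) v - rho (K v) u))
     \<and> (\<forall>u. E (K u) = K (T u))"

definition K_bracket :: "('g \<Rightarrow> 'w \<Rightarrow> 'w::ab_group_add) \<Rightarrow> ('w \<Rightarrow> 'g) \<Rightarrow> 'w \<Rightarrow> 'w \<Rightarrow> 'w" where
  "K_bracket rho K u v = rho (K u) v - rho (K v) u"

end

theory Submission
  imports Defs
begin

(* The Rota-Baxter identity says K [u,v]_K = [K u, K v], so rho (K [v,w]_K) is the commutator
   of rho (K v) and rho (K w); the Jacobi identity for [-,-]_K then reduces to a cancellation
   of composites of these operators. Bilinearity is inherited from rho and K, and the
   compatibility T [u,v]_K = [u, T v]_K follows from T rho(x) = rho(E x) = rho(x) T together
   with E K = K T. *)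

lemma is_linear_diff: "is_linear s1 s2 f \<Longrightarrow> f (x - y) = f x - f y"
  unfolding is_linear_def linear_iff_module_hom by (rule module_hom.diff)

lemma is_linear_diff_fun:
  assumes "is_linear s1 s2 f" and "is_linear s1 s2 g"
  shows "is_linear s1 s2 (\<lambda>x. f x - g x)"
proof -
  have "vector_space_pair s1 s2"
    using assms(1) unfolding is_linear_def Vector_Spaces.linear_iff vector_space_pair_def by simp
  then show ?thesis
    using assms unfolding is_linear_def by (rule vector_space_pair.linear_compose_sub)
qed

lemma lie_rep_linear_operator:
  "lie_rep s br sw rho \<Longrightarrow> is_linear sw sw (rho x)"
  unfolding lie_rep_def by blast

lemma lie_rep_commutator:
  "lie_rep s br sw rho \<Longrightarrow> rho (br x y) u = rho x (rho y u) - rho y (rho x u)"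
  unfolding lie_rep_def by blast

lemma lie_rep_comp_linear:
  assumes "lie_rep s br sw rho" and "is_linear sw s K"
  shows "is_linear sw sw (\<lambda>v. rho (K v) u)"
  using assms unfolding lie_rep_def is_linear_def Vector_Spaces.linear_iff by simp

lemma K_bracket_linear_right:
  assumes "lie_rep s br sw rho" and "is_linear sw s K"
  shows "is_linear sw sw (K_bracket rho K u)"
  unfolding K_bracket_def[abs_def]
  using assms by (intro is_linear_diff_fun lie_rep_linear_operator lie_rep_comp_linear)

lemma K_bracket_linear_left:
  assumes "lie_rep s br sw rho" and "is_linear sw s K"
  shows "is_linear sw sw (\<lambda>u. K_bracket rho K u v)"
  unfolding K_bracket_def
  using assms by (intro is_linear_diff_fun lie_rep_linear_operator lie_rep_comp_linear)

lemma K_bracket_jacobi: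
  assumes rep: "lie_rep s br sw rho"
    and RB: "\<And>u v. br (K u) (K v) = K (K_bracket rho K u v)"
  shows "K_bracket rho K u (K_bracket rho K v w) + K_bracket rho K v (K_bracket rho K w u)
      + K_bracket rho K w (K_bracket rho K u v) = 0"
proof -
  have expand: "K_bracket rho K a (K_bracket rho K b c) =
      rho (K a) (rho (K b) c) - rho (K a) (rho (K c) b)
      - (rho (K b) (rho (K c) a) - rho (K c) (rho (K b) a))" for a b c
  proof -
    have "rho (K (K_bracket rho K b c)) a = rho (K b) (rho (K c) a) - rho (K c) (rho (K b) a)"
      using lie_rep_commutator[OF rep] by (simp flip: RB)
    then show ?thesis
      unfolding K_bracket_def[of rho K a] K_bracket_def[of rho K b c]
      by (simp add: is_linear_diff[OF lie_rep_linear_operator[OF rep]])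
  qed
  show ?thesis
    unfolding expand by (simp add: diff_add_eq)
qed

lemma lie_algebra_K_bracket:
  assumes rep: "lie_rep s br sw rho" and K: "is_linear sw s K"
    and RB: "\<And>u v. br (K u) (K v) = K (K_bracket rho K u v)"
  shows "lie_algebra sw (K_bracket rho K)"
  unfolding lie_algebra_def
proof (intro conjI allI)
  show "vector_space sw"
    using rep unfolding lie_rep_def by blast
  show "is_linear sw sw (K_bracket rho K u)" "is_linear sw sw (\<lambda>u. K_bracket rho K u v)" for u v
    using rep K by (rule K_bracket_linear_right, rule K_bracket_linear_left)
  show "K_bracket rho K u u = 0" for u
    unfolding K_bracket_def by simp
  show "K_bracket rho K u (K_bracket rho K v w) + K_bracket rho K v (K_bracket rho K w u)
      + K_bracket rho K w (K_bracket rho K u v) = 0" for u v w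
    using rep RB by (rule K_bracket_jacobi)
qed

lemma T_K_bracket:
  assumes rep: "ENE_rep s br E sw T rho" and EK: "\<And>u. E (K u) = K (T u)"
  shows "T (K_bracket rho K u v) = K_bracket rho K u (T v)"
proof -
  have T: "is_linear sw sw T"
    and T_rho_E: "T (rho x w) = rho (E x) w" and T_rho: "T (rho x w) = rho x (T w)" for x w
    using rep unfolding ENE_rep_def by simp_all
  have "T (K_bracket rho K u v) = T (rho (K u) v) - T (rho (K v) u)"
    unfolding K_bracket_def by (rule is_linear_diff[OF T])
  also have "\<dots> = rho (K u) (T v) - rho (K (T v)) u"
    unfolding T_rho_E[of "K v"] EK by (simp only: T_rho)
  finally show ?thesis
    unfolding K_bracket_def .
qed

lemma ENL_algebra_K_bracket:
  assumes rep: "ENE_rep s br E sw T rho" and RB: "ENE_relative_RB s br E sw T rho K"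
  shows "ENL_algebra sw (K_bracket rho K) T"
proof -
  have rho: "lie_rep s br sw rho" and T: "is_linear sw sw T"
    using rep unfolding ENE_rep_def by blast+
  have K: "is_linear sw s K" and KK: "\<And>u v. br (K u) (K v) = K (K_bracket rho K u v)"
    and EK: "\<And>u. E (K u) = K (T u)"
    using RB unfolding ENE_relative_RB_def K_bracket_def by blast+
  show ?thesis
    unfolding ENL_algebra_def
  proof (intro conjI allI)
    show "lie_algebra sw (K_bracket rho K)"
      using rho K KK by (rule lie_algebra_K_bracket)
    show "is_linear sw sw T"
      by (fact T)
    show "T (K_bracket rho K u v) = K_bracket rho K u (T v)" for u v
      using rep EK by (rule T_K_bracket)
  qed
qed

theorem proposition6p3:
  fixes s :: "'k::field_char_0 \<Rightarrow> 'g::ab_group_add \<Rightarrow> 'g"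
    and sw :: "'k \<Rightarrow> 'w::ab_group_add \<Rightarrow> 'w"
    and br :: "'g \<Rightarrow> 'g \<Rightarrow> 'g" and E :: "'g \<Rightarrow> 'g"
    and T :: "'w \<Rightarrow> 'w" and rho :: "'g \<Rightarrow> 'w \<Rightarrow> 'w" and K :: "'w \<Rightarrow> 'g"
  assumes "\<forall>p :: 'k poly. degree p \<ge> 1 \<longrightarrow> (\<exists>z. poly p z = 0)"
    and "fin_vs s" and "fin_vs sw"
    and "ENL_algebra s br E"
    and "ENE_rep s br E sw T rho"
    and "ENE_relative_RB s br E sw T rho K"
  shows "ENL_algebra sw (K_bracket rho K) T"
  using assms(5,6) by (rule ENL_algebra_K_bracket)

end
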